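(* Let $D$ be a regular $(v,k,\lambda,\mu)$-PDS in a finite group $G$ with $0<\mu<k$ and $\sqrt\Delta\in\mathbb{Z}$. If $p$ is a prime and $p^\ell$ divides both $\theta_1$ and $\theta_2$, then $k\equiv0\pmod{p^\ell}$. In particular $k\equiv0\pmod{\gcd(\theta_1,\theta_2)}$.
   Context: A $(v,k,\lambda,\mu)$-PDS in a group $G$ of order $v$ is a $k$-subset $D$ such that every nonidentity element of $D$ is $xy^{-1}$ ($x,y\in D$) in exactly $\lambda$ ways and every nonidentity element of $G\setminus D$ in exactly $\mu$ ways; regular means $D=D^{(-1)}$ and $1\notin D$. $\Delta=(\lambda-\mu)^2+4(k-\mu)$, $\theta_{1,2}=\frac12(\lambda-\mu\pm\sqrt\Delta)$. *)

theory Defs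
  imports "HOL-Algebra.Group" "HOL-Analysis.Analysis"
begin

definition is_pds :: "('a, 'b) monoid_scheme \<Rightarrow> 'a set \<Rightarrow> nat \<Rightarrow> nat \<Rightarrow> nat \<Rightarrow> nat \<Rightarrow> bool" where
  "is_pds G D v k lam mu \<longleftrightarrow>
     card (carrier G) = v \<and> D \<subseteq> carrier G \<and> card D = k \<and>
     (\<forall>g \<in> carrier G. g \<noteq> \<one>\<^bsub>G\<^esub> \<longrightarrow>
        card {(x, y). x \<in> D \<and> y \<in> D \<and> x \<otimes>\<^bsub>G\<^esub> inv\<^bsub>G\<^esub> y = g}
          = (if g \<in> D then lam else mu))"

definition is_regular_pds :: "('a, 'b) monoid_scheme \<Rightarrow> 'a set \<Rightarrow> nat \<Rightarrow> nat \<Rightarrow> nat \<Rightarrow> nat \<Rightarrow> bool" where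
  "is_regular_pds G D v k lam mu \<longleftrightarrow>
     is_pds G D v k lam mu \<and> (\<lambda>x. inv\<^bsub>G\<^esub> x) ` D = D \<and> \<one>\<^bsub>G\<^esub> \<notin> D"

definition pds_Delta :: "nat \<Rightarrow> nat \<Rightarrow> nat \<Rightarrow> int" where
  "pds_Delta k lam mu = (int lam - int mu)^2 + 4 * (int k - int mu)"

definition pds_theta1 :: "nat \<Rightarrow> nat \<Rightarrow> nat \<Rightarrow> real" where
  "pds_theta1 k lam mu = (real lam - real mu + sqrt (real_of_int (pds_Delta k lam mu))) / 2"

definition pds_theta2 :: "nat \<Rightarrow> nat \<Rightarrow> nat \<Rightarrow> real" where
  "pds_theta2 k lam mu = (real lam - real mu - sqrt (real_of_int (pds_Delta k lam mu))) / 2"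

end

theory Submission
  imports Defs "Jordan_Normal_Form.Schur_Decomposition"
begin

(* Let A be the adjacency matrix of the Cayley graph of G with connection set D. Counting
   representations g = x y^-1 gives A^2 = kI + lambda A + mu (J - I - A) and AJ = kJ, which is
   (A - theta1)(A - theta2) = mu J; hence (A - k)(A - theta1)(A - theta2) = 0 and every eigenvalue of A
   is k, theta1 or theta2. Taking the trace of (A - theta1)(A - theta2) = mu J shows that k is a simple
   eigenvalue, because (k - theta1)(k - theta2) = mu v is nonzero. As A has zero diagonal, its trace
   gives k + f theta1 + g theta2 = 0 with f, g the multiplicities of theta1, theta2, so every common
   divisor of theta1 and theta2 divides k. The eigenvalues are read off the diagonal of a Schur
   triangularisation of A. *)

section \<open>Traces and triangularisation\<close>

definition mat_trace :: "'a::comm_monoid_add mat \<Rightarrow> 'a" where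
  "mat_trace A = (\<Sum>i<dim_row A. A $$ (i, i))"

definition ones_mat :: "nat \<Rightarrow> 'a::one mat" where
  "ones_mat n = mat n n (\<lambda>_. 1)"

lemma ones_mat_carrier [simp]: "ones_mat n \<in> carrier_mat n n"
  by (simp add: ones_mat_def)

lemma dim_ones_mat [simp]: "dim_row (ones_mat n) = n" "dim_col (ones_mat n) = n"
  by (simp_all add: ones_mat_def)

lemma index_ones_mat [simp]: "i < n \<Longrightarrow> j < n \<Longrightarrow> ones_mat n $$ (i, j) = 1"
  by (simp add: ones_mat_def)

lemma index_mult_mat_sum:
  fixes X Y :: "'a::semiring_0 mat"
  assumes "X \<in> carrier_mat n m" "Y \<in> carrier_mat m r" "i < n" "j < r"
  shows "(X * Y) $$ (i, j) = (\<Sum>l<m. X $$ (i, l) * Y $$ (l, j))"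
  using assms by (auto simp: scalar_prod_def atLeast0LessThan intro!: sum.cong)

lemma mat_trace_smult:
  fixes A :: "'a::semiring_0 mat"
  assumes "A \<in> carrier_mat n n"
  shows "mat_trace (c \<cdot>\<^sub>m A) = c * mat_trace A"
  using assms unfolding mat_trace_def by (auto simp: sum_distrib_left intro!: sum.cong)

lemma mat_trace_mult_comm:
  fixes X Y :: "'a::comm_semiring_0 mat"
  assumes "X \<in> carrier_mat n m" "Y \<in> carrier_mat m n"
  shows "mat_trace (X * Y) = mat_trace (Y * X)"
proof -
  have "mat_trace (X * Y) = (\<Sum>i<n. \<Sum>l<m. X $$ (i, l) * Y $$ (l, i))"
    using assms index_mult_mat_sum[OF assms(1,2)] by (auto simp: mat_trace_def)
  also have "\<dots> = (\<Sum>l<m. \<Sum>i<n. Y $$ (l, i) * X $$ (i, l))"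
    by (subst sum.swap) (simp add: mult.commute)
  also have "\<dots> = mat_trace (Y * X)"
    using assms index_mult_mat_sum[OF assms(2,1)] by (auto simp: mat_trace_def)
  finally show ?thesis .
qed

lemma mat_trace_similar_mat_wit:
  fixes A B :: "'a::comm_semiring_1 mat"
  assumes "similar_mat_wit A B P Q"
  shows "mat_trace A = mat_trace B"
proof -
  obtain n where A: "A \<in> carrier_mat n n" and B: "B \<in> carrier_mat n n"
    and P: "P \<in> carrier_mat n n" and Q: "Q \<in> carrier_mat n n"
    and QP: "Q * P = 1\<^sub>m n" and APBQ: "A = P * B * Q"
    using similar_mat_witD[OF refl assms] by blast
  have "mat_trace A = mat_trace (P * (B * Q))"
    using APBQ P B Q by simp
  also have "\<dots> = mat_trace (B * Q * P)"
    using P B Q by (subst mat_trace_mult_comm[of _ n n]) auto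
  also have "B * Q * P = B"
    using P B Q QP by simp
  finally show ?thesis .
qed

lemma similar_mat_wit_mult:
  assumes AB: "similar_mat_wit A B P Q" and AB': "similar_mat_wit A' B' P Q"
  shows "similar_mat_wit (A * A') (B * B') P Q"
proof -
  define n where "n = dim_row A"
  note w = similar_mat_witD[OF n_def AB]
  have "n = dim_row A'"
    using similar_mat_witD(6)[OF refl AB'] w(6) by auto
  note w' = similar_mat_witD[OF this AB']
  have "P * (B * B') * Q = P * (B * (Q * P) * B') * Q"
    using w(2,5) by simp
  also have "\<dots> = P * B * Q * (P * B' * Q)"
    using w(5-7) w'(5) by (simp add: assoc_mult_mat[of _ n n _ n _ n])
  finally have "A * A' = P * (B * B') * Q"
    using w(3) w'(3) by simp
  then show ?thesis
    using w w' by (intro similar_mat_witI[of P Q n]) auto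
qed

lemma similar_mat_wit_shift:
  fixes A B :: "'a::comm_ring_1 mat"
  assumes "similar_mat_wit A B P Q" and "A \<in> carrier_mat n n"
  shows "similar_mat_wit (A - c \<cdot>\<^sub>m 1\<^sub>m n) (B - c \<cdot>\<^sub>m 1\<^sub>m n) P Q"
proof -
  have B: "B \<in> carrier_mat n n" and P: "P \<in> carrier_mat n n" and Q: "Q \<in> carrier_mat n n"
    and PQ: "P * Q = 1\<^sub>m n" and QP: "Q * P = 1\<^sub>m n" and APBQ: "A = P * B * Q"
    using similar_mat_witD2[OF assms(2,1)] by auto
  have "P * (B - c \<cdot>\<^sub>m 1\<^sub>m n) * Q = P * B * Q - P * (c \<cdot>\<^sub>m 1\<^sub>m n) * Q"
    using B P Q by (simp add: mult_minus_distrib_mat[of _ n n] minus_mult_distrib_mat[of _ n n])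
  also have "P * (c \<cdot>\<^sub>m 1\<^sub>m n) * Q = P * ((c \<cdot>\<^sub>m 1\<^sub>m n) * Q)"
    using P Q by (simp add: assoc_mult_mat[of _ n n _ n _ n])
  also have "(c \<cdot>\<^sub>m 1\<^sub>m n) * Q = c \<cdot>\<^sub>m Q"
    using Q by (simp add: mult_smult_assoc_mat[of _ n n])
  also have "P * (c \<cdot>\<^sub>m Q) = c \<cdot>\<^sub>m (P * Q)"
    using P Q by (simp add: mult_smult_distrib[of _ n n])
  finally have "P * (B - c \<cdot>\<^sub>m 1\<^sub>m n) * Q = A - c \<cdot>\<^sub>m 1\<^sub>m n"
    using APBQ PQ by simp
  then show ?thesis
    using PQ QP assms(2) B P Q by (intro similar_mat_witI[of P Q n]) auto
qed

lemma similar_mat_wit_zero: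
  assumes "similar_mat_wit (0\<^sub>m n n) B P Q"
  shows "B = 0\<^sub>m n n"
proof -
  note w = similar_mat_witD2[OF zero_carrier_mat assms]
  have "B = Q * 0\<^sub>m n n * P"
    using similar_mat_witD2(3)[OF w(5) similar_mat_wit_sym[OF assms]] .
  also have "\<dots> = 0\<^sub>m n n"
    using w(6,7) by simp
  finally show ?thesis .
qed

lemma upper_triangular_mult:
  fixes X Y :: "'a::semiring_0 mat"
  assumes X: "X \<in> carrier_mat n n" and Y: "Y \<in> carrier_mat n n"
    and "upper_triangular X" and "upper_triangular Y"
  shows "upper_triangular (X * Y)"
proof (rule upper_triangularI)
  fix i j assume "j < i" and "i < dim_row (X * Y)"
  then have i: "i < n"
    using X by simp
  have "X $$ (i, l) * Y $$ (l, j) = 0" if "l < n" for l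
  proof (cases "l < i")
    case True
    then show ?thesis using upper_triangularD[OF assms(3) True] i X by simp
  next
    case False
    then show ?thesis using upper_triangularD[OF assms(4), of j l] that \<open>j < i\<close> Y by simp
  qed
  moreover have "(X * Y) $$ (i, j) = (\<Sum>l<n. X $$ (i, l) * Y $$ (l, j))"
    using \<open>j < i\<close> i by (intro index_mult_mat_sum[OF X Y]) auto
  ultimately show "(X * Y) $$ (i, j) = 0"
    by simp
qed

lemma diag_upper_triangular_mult:
  fixes X Y :: "'a::semiring_0 mat"
  assumes X: "X \<in> carrier_mat n n" and Y: "Y \<in> carrier_mat n n"
    and "upper_triangular X" and "upper_triangular Y" and "i < n"
  shows "(X * Y) $$ (i, i) = X $$ (i, i) * Y $$ (i, i)"
proof -
  have diag_terms: "X $$ (i, l) * Y $$ (l, i) = (if l = i then X $$ (i, i) * Y $$ (i, i) else 0)"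
    if "l < n" for l
  proof (cases "l < i")
    case True
    then show ?thesis using upper_triangularD[OF assms(3) True] assms(5) X by simp
  next
    case False
    then show ?thesis using upper_triangularD[OF assms(4), of i l] that Y by auto
  qed
  have "(X * Y) $$ (i, i) = (\<Sum>l<n. X $$ (i, l) * Y $$ (l, i))"
    using index_mult_mat_sum[OF X Y assms(5,5)] .
  also have "\<dots> = (\<Sum>l<n. if l = i then X $$ (i, i) * Y $$ (i, i) else 0)"
    by (intro sum.cong refl diag_terms) simp
  finally show ?thesis
    using assms(5) by simp
qed

lemma complex_mat_triangularizable:
  fixes A :: "complex mat"
  assumes "A \<in> carrier_mat n n"
  obtains B P Q where "similar_mat_wit A B P Q" and "upper_triangular B"
proof -
  obtain es where "char_poly A = (\<Prod>a\<leftarrow>es. [:- a, 1:])"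
    using char_poly_factorized[OF assms] by blast
  moreover obtain B P Q where "schur_decomposition A es = (B, P, Q)"
    by (cases "schur_decomposition A es") auto
  ultimately show thesis
    using schur_decomposition[OF assms] that by blast
qed

lemma sum_eq_zero_root_counts:
  fixes b :: "nat \<Rightarrow> 'a::field_char_0"
  assumes roots: "\<And>i. i < n \<Longrightarrow> b i = k \<or> (b i - t1) * (b i - t2) = 0"
    and nonzero: "(k - t1) * (k - t2) \<noteq> 0"
    and quad_sum: "(\<Sum>i<n. (b i - t1) * (b i - t2)) = (k - t1) * (k - t2)"
    and lin_sum: "(\<Sum>i<n. b i) = 0"
  shows "\<exists>f g::nat. k + of_nat f * t1 + of_nat g * t2 = 0"
proof -
  define S where "S = {i \<in> {..<n}. b i = k}"
  define T1 where "T1 = {i \<in> {..<n}. b i \<noteq> k \<and> b i = t1}"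
  define T2 where "T2 = {i \<in> {..<n}. b i \<noteq> k \<and> b i \<noteq> t1}"
  have "(\<Sum>i<n. (b i - t1) * (b i - t2)) = (\<Sum>i\<in>S. (b i - t1) * (b i - t2))"
    using roots unfolding S_def by (intro sum.mono_neutral_right) auto
  also have "\<dots> = of_nat (card S) * ((k - t1) * (k - t2))"
    unfolding S_def by simp
  finally have "card S = 1"
    using quad_sum nonzero by simp
  have "{..<n} = S \<union> T1 \<union> T2" and "S \<inter> T1 = {}" and "(S \<union> T1) \<inter> T2 = {}"
    by (auto simp: S_def T1_def T2_def)
  moreover have "finite S" "finite T1" "finite T2"
    by (simp_all add: S_def T1_def T2_def)
  ultimately have "(\<Sum>i<n. b i) = sum b S + sum b T1 + sum b T2"
    by (simp add: sum.union_disjoint)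
  also have "sum b S = of_nat (card S) * k"
    by (simp add: S_def)
  also have "sum b T1 = of_nat (card T1) * t1"
    by (simp add: T1_def)
  also have "sum b T2 = of_nat (card T2) * t2"
  proof -
    have "b i = t2" if "i \<in> T2" for i
      using roots[of i] that by (auto simp: T2_def)
    then show ?thesis
      by (simp add: sum.cong[of T2 T2 b "\<lambda>_. t2"])
  qed
  finally show ?thesis
    using lin_sum \<open>card S = 1\<close> by auto
qed

section \<open>Matrices of strongly regular graphs\<close>

lemma ones_mat_mult_ones_mat:
  "ones_mat n * ones_mat n = of_nat n \<cdot>\<^sub>m (ones_mat n :: 'a::semiring_1 mat)"
  by (rule eq_matI) (simp_all add: ones_mat_def scalar_prod_def)

lemma mat_trace_ones_mat: "mat_trace (ones_mat n :: 'a::semiring_1 mat) = of_nat n"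
  by (simp add: mat_trace_def ones_mat_def)

lemma mult_shifted_mat:
  fixes A :: "'a::comm_ring_1 mat"
  assumes A: "A \<in> carrier_mat n n"
  shows "(A - a \<cdot>\<^sub>m 1\<^sub>m n) * (A - b \<cdot>\<^sub>m 1\<^sub>m n) = A * A - (a + b) \<cdot>\<^sub>m A + (a * b) \<cdot>\<^sub>m 1\<^sub>m n"
proof -
  have "(A - a \<cdot>\<^sub>m 1\<^sub>m n) * (A - b \<cdot>\<^sub>m 1\<^sub>m n)
      = A * (A - b \<cdot>\<^sub>m 1\<^sub>m n) - (a \<cdot>\<^sub>m 1\<^sub>m n) * (A - b \<cdot>\<^sub>m 1\<^sub>m n)"
    using A by (intro minus_mult_distrib_mat[of _ n n _ _ n]) auto
  also have "A * (A - b \<cdot>\<^sub>m 1\<^sub>m n) = A * A - b \<cdot>\<^sub>m A"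
    using A by (simp add: mult_minus_distrib_mat[of A n n A n] mult_smult_distrib[of A n n _ n])
  also have "(a \<cdot>\<^sub>m 1\<^sub>m n) * (A - b \<cdot>\<^sub>m 1\<^sub>m n) = a \<cdot>\<^sub>m (A - b \<cdot>\<^sub>m 1\<^sub>m n)"
    using A by (subst mult_smult_assoc_mat[OF one_carrier_mat]) auto
  finally show ?thesis
    using A by (intro eq_matI) (auto simp: algebra_simps)
qed

lemma shifted_mat_mult_ones_mat:
  fixes A :: "'a::comm_ring_1 mat"
  assumes A: "A \<in> carrier_mat n n" and row_sum: "A * ones_mat n = k \<cdot>\<^sub>m ones_mat n"
  shows "(A - t \<cdot>\<^sub>m 1\<^sub>m n) * ones_mat n = (k - t) \<cdot>\<^sub>m ones_mat n"
proof -
  have "(A - t \<cdot>\<^sub>m 1\<^sub>m n) * ones_mat n = A * ones_mat n - (t \<cdot>\<^sub>m 1\<^sub>m n) * ones_mat n"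
    using A by (intro minus_mult_distrib_mat[of _ n n _ _ n]) auto
  also have "(t \<cdot>\<^sub>m 1\<^sub>m n) * ones_mat n = t \<cdot>\<^sub>m ones_mat n"
    by (subst mult_smult_assoc_mat[OF one_carrier_mat ones_mat_carrier]) simp
  finally show ?thesis
    using row_sum by (intro eq_matI) (auto simp: algebra_simps)
qed

lemma srg_mat_factor:
  fixes A :: "'a::comm_ring_1 mat"
  assumes A: "A \<in> carrier_mat n n"
    and square: "A * A = k \<cdot>\<^sub>m 1\<^sub>m n + lam \<cdot>\<^sub>m A + mu \<cdot>\<^sub>m (ones_mat n - 1\<^sub>m n - A)"
    and roots_sum: "t1 + t2 = lam - mu" and roots_prod: "t1 * t2 = mu - k"
  shows "(A - t1 \<cdot>\<^sub>m 1\<^sub>m n) * (A - t2 \<cdot>\<^sub>m 1\<^sub>m n) = mu \<cdot>\<^sub>m ones_mat n"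
  unfolding mult_shifted_mat[OF A] square roots_sum roots_prod
  using A by (intro eq_matI) (auto simp: algebra_simps)

(* For the Cayley matrix of a PDS this is the counting identity k (k - lambda - 1) = mu (v - k - 1). *)
lemma srg_valency_equation:
  fixes A :: "'a::comm_ring_1 mat"
  assumes A: "A \<in> carrier_mat n n" and "0 < n"
    and quad: "(A - t1 \<cdot>\<^sub>m 1\<^sub>m n) * (A - t2 \<cdot>\<^sub>m 1\<^sub>m n) = mu \<cdot>\<^sub>m ones_mat n"
    and row_sum: "A * ones_mat n = k \<cdot>\<^sub>m ones_mat n"
  shows "(k - t1) * (k - t2) = mu * of_nat n"
proof -
  let ?J = "ones_mat n :: 'a mat"
  have shifted: "(A - t \<cdot>\<^sub>m 1\<^sub>m n) * ?J = (k - t) \<cdot>\<^sub>m ?J" for t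
    using shifted_mat_mult_ones_mat[OF A row_sum] .
  have "(mu * of_nat n) \<cdot>\<^sub>m ?J = (mu \<cdot>\<^sub>m ?J) * ?J"
    by (rule eq_matI) (auto simp: mult_smult_assoc_mat[of ?J n n ?J n] ones_mat_mult_ones_mat)
  also have "\<dots> = (A - t1 \<cdot>\<^sub>m 1\<^sub>m n) * (A - t2 \<cdot>\<^sub>m 1\<^sub>m n) * ?J"
    by (simp only: quad)
  also have "\<dots> = (A - t1 \<cdot>\<^sub>m 1\<^sub>m n) * ((A - t2 \<cdot>\<^sub>m 1\<^sub>m n) * ?J)"
    using A by (intro assoc_mult_mat[of _ n n _ n _ n]) auto
  also have "\<dots> = (k - t2) \<cdot>\<^sub>m ((A - t1 \<cdot>\<^sub>m 1\<^sub>m n) * ?J)"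
    using A by (simp add: shifted mult_smult_distrib[of _ n n ?J n] minus_carrier_mat)
  also have "\<dots> = ((k - t1) * (k - t2)) \<cdot>\<^sub>m ?J"
    by (rule eq_matI) (auto simp: shifted)
  finally have "((mu * of_nat n) \<cdot>\<^sub>m ?J) $$ (0, 0) = (((k - t1) * (k - t2)) \<cdot>\<^sub>m ?J) $$ (0, 0)"
    by simp
  then show ?thesis
    using \<open>0 < n\<close> by simp
qed

lemma complex_mat_eigenvalue_enumeration:
  fixes A :: "complex mat"
  assumes A: "A \<in> carrier_mat n n"
  obtains b where "mat_trace A = (\<Sum>i<n. b i)"
    and "\<And>s t. mat_trace ((A - s \<cdot>\<^sub>m 1\<^sub>m n) * (A - t \<cdot>\<^sub>m 1\<^sub>m n)) = (\<Sum>i<n. (b i - s) * (b i - t))"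
    and "\<And>r s t i. (A - r \<cdot>\<^sub>m 1\<^sub>m n) * ((A - s \<cdot>\<^sub>m 1\<^sub>m n) * (A - t \<cdot>\<^sub>m 1\<^sub>m n)) = 0\<^sub>m n n \<Longrightarrow>
        i < n \<Longrightarrow> (b i - r) * ((b i - s) * (b i - t)) = 0"
proof -
  obtain B P Q where sim: "similar_mat_wit A B P Q" and ut: "upper_triangular B"
    using complex_mat_triangularizable[OF A] .
  have B: "B \<in> carrier_mat n n"
    using similar_mat_witD2[OF A sim] by blast
  define b where "b i = B $$ (i, i)" for i
  have sim_shift: "similar_mat_wit (A - t \<cdot>\<^sub>m 1\<^sub>m n) (B - t \<cdot>\<^sub>m 1\<^sub>m n) P Q" for t
    using similar_mat_wit_shift[OF sim A] .
  have ut_shift: "upper_triangular (B - t \<cdot>\<^sub>m 1\<^sub>m n)" for t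
    using B by (intro upper_triangularI) (simp add: upper_triangularD[OF ut])
  have B_shift: "B - t \<cdot>\<^sub>m 1\<^sub>m n \<in> carrier_mat n n" for t
    by (simp add: minus_carrier_mat)
  have diag_shift: "(B - t \<cdot>\<^sub>m 1\<^sub>m n) $$ (i, i) = b i - t" if "i < n" for i t
    using B that by (simp add: b_def)
  have diag_quad: "((B - s \<cdot>\<^sub>m 1\<^sub>m n) * (B - t \<cdot>\<^sub>m 1\<^sub>m n)) $$ (i, i) = (b i - s) * (b i - t)"
    if "i < n" for i s t
    using diag_upper_triangular_mult[OF B_shift B_shift ut_shift ut_shift that] that diag_shift
    by simp
  show thesis
  proof
    show "mat_trace A = (\<Sum>i<n. b i)"
      using mat_trace_similar_mat_wit[OF sim] B by (simp add: mat_trace_def b_def)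
    show "mat_trace ((A - s \<cdot>\<^sub>m 1\<^sub>m n) * (A - t \<cdot>\<^sub>m 1\<^sub>m n)) = (\<Sum>i<n. (b i - s) * (b i - t))" for s t
      using mat_trace_similar_mat_wit[OF similar_mat_wit_mult[OF sim_shift[of s] sim_shift[of t]]]
        B diag_quad by (simp add: mat_trace_def)
  next
    fix r s t i
    let ?BB = "(B - s \<cdot>\<^sub>m 1\<^sub>m n) * (B - t \<cdot>\<^sub>m 1\<^sub>m n)"
    assume annihilated: "(A - r \<cdot>\<^sub>m 1\<^sub>m n) * ((A - s \<cdot>\<^sub>m 1\<^sub>m n) * (A - t \<cdot>\<^sub>m 1\<^sub>m n)) = 0\<^sub>m n n"
      and i: "i < n"
    have "similar_mat_wit (0\<^sub>m n n) ((B - r \<cdot>\<^sub>m 1\<^sub>m n) * ?BB) P Q"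
      using similar_mat_wit_mult[OF sim_shift[of r] similar_mat_wit_mult[OF sim_shift[of s] sim_shift[of t]]]
      by (simp only: annihilated)
    then have "(B - r \<cdot>\<^sub>m 1\<^sub>m n) * ?BB = 0\<^sub>m n n"
      by (rule similar_mat_wit_zero)
    moreover have "((B - r \<cdot>\<^sub>m 1\<^sub>m n) * ?BB) $$ (i, i) = (B - r \<cdot>\<^sub>m 1\<^sub>m n) $$ (i, i) * ?BB $$ (i, i)"
      using B_shift by (intro diag_upper_triangular_mult[OF B_shift _ ut_shift
          upper_triangular_mult[OF B_shift B_shift ut_shift ut_shift] i]) auto
    ultimately show "(b i - r) * ((b i - s) * (b i - t)) = 0"
      using i diag_shift[OF i] diag_quad[OF i] by simp
  qed
qed

lemma srg_eigenvalue_relation: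
  fixes A :: "complex mat"
  assumes A: "A \<in> carrier_mat n n" and "0 < n"
    and quad: "(A - t1 \<cdot>\<^sub>m 1\<^sub>m n) * (A - t2 \<cdot>\<^sub>m 1\<^sub>m n) = mu \<cdot>\<^sub>m ones_mat n"
    and row_sum: "A * ones_mat n = k \<cdot>\<^sub>m ones_mat n"
    and "mu \<noteq> 0" and "mat_trace A = 0"
  shows "\<exists>f g::nat. k + of_nat f * t1 + of_nat g * t2 = 0"
proof -
  have k_root: "(k - t1) * (k - t2) = mu * of_nat n"
    using srg_valency_equation[OF A \<open>0 < n\<close> quad row_sum] .
  have "(A - k \<cdot>\<^sub>m 1\<^sub>m n) * ((A - t1 \<cdot>\<^sub>m 1\<^sub>m n) * (A - t2 \<cdot>\<^sub>m 1\<^sub>m n))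
      = mu \<cdot>\<^sub>m ((A - k \<cdot>\<^sub>m 1\<^sub>m n) * ones_mat n)"
    using A by (simp add: quad mult_smult_distrib[of _ n n "ones_mat n" n] minus_carrier_mat)
  also have "\<dots> = 0\<^sub>m n n"
    by (rule eq_matI) (auto simp: shifted_mat_mult_ones_mat[OF A row_sum])
  finally have annihilated:
    "(A - k \<cdot>\<^sub>m 1\<^sub>m n) * ((A - t1 \<cdot>\<^sub>m 1\<^sub>m n) * (A - t2 \<cdot>\<^sub>m 1\<^sub>m n)) = 0\<^sub>m n n" .
  obtain b where trace: "mat_trace A = (\<Sum>i<n. b i)"
    and trace_quad: "\<And>s t. mat_trace ((A - s \<cdot>\<^sub>m 1\<^sub>m n) * (A - t \<cdot>\<^sub>m 1\<^sub>m n))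
        = (\<Sum>i<n. (b i - s) * (b i - t))"
    and cubic: "\<And>r s t i. (A - r \<cdot>\<^sub>m 1\<^sub>m n) * ((A - s \<cdot>\<^sub>m 1\<^sub>m n) * (A - t \<cdot>\<^sub>m 1\<^sub>m n)) = 0\<^sub>m n n \<Longrightarrow>
        i < n \<Longrightarrow> (b i - r) * ((b i - s) * (b i - t)) = 0"
    using complex_mat_eigenvalue_enumeration[OF A] by blast
  show ?thesis
  proof (rule sum_eq_zero_root_counts)
    show "b i = k \<or> (b i - t1) * (b i - t2) = 0" if "i < n" for i
      using cubic[OF annihilated that] by simp
    show "(k - t1) * (k - t2) \<noteq> 0"
      using k_root \<open>mu \<noteq> 0\<close> \<open>0 < n\<close> by simp
    show "(\<Sum>i<n. (b i - t1) * (b i - t2)) = (k - t1) * (k - t2)"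
      using trace_quad[of t1 t2] k_root by (simp add: quad mat_trace_smult[of _ n] mat_trace_ones_mat)
    show "(\<Sum>i<n. b i) = 0"
      using trace \<open>mat_trace A = 0\<close> by simp
  qed
qed

section \<open>Cayley matrices of partial difference sets\<close>

definition cayley_mat :: "('a, 'b) monoid_scheme \<Rightarrow> 'a set \<Rightarrow> (nat \<Rightarrow> 'a) \<Rightarrow> nat \<Rightarrow> 'c::comm_ring_1 mat"
  where "cayley_mat G D e n = mat n n (\<lambda>(i, j). if e i \<otimes>\<^bsub>G\<^esub> inv\<^bsub>G\<^esub> (e j) \<in> D then 1 else 0)"

lemma cayley_mat_carrier [simp]: "cayley_mat G D e n \<in> carrier_mat n n"
  by (simp add: cayley_mat_def)

lemma dim_cayley_mat [simp]: "dim_row (cayley_mat G D e n) = n" "dim_col (cayley_mat G D e n) = n"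
  by (simp_all add: cayley_mat_def)

lemma sum_indicator_bij_betw:
  fixes e :: "nat \<Rightarrow> 'b"
  assumes "bij_betw e {..<n} C"
  shows "(\<Sum>l<n. if P (e l) then 1 else 0) = (of_nat (card {z \<in> C. P z}) :: 'a::comm_semiring_1)"
proof -
  have "(\<Sum>l<n. if P (e l) then 1 else (0::'a)) = (\<Sum>z\<in>C. if P z then 1 else 0)"
    using sum.reindex_bij_betw[OF assms, of "\<lambda>z. if P z then 1 else 0"] .
  also have "\<dots> = of_nat (card {z \<in> C. P z})"
  proof -
    have "finite C"
      using bij_betw_finite[OF assms] by simp
    then show ?thesis
      by (simp add: sum.inter_filter[symmetric])
  qed
  finally show ?thesis .
qed

context group
begin

lemma inv_mult_cancel_left [simp]:
  "x \<in> carrier G \<Longrightarrow> y \<in> carrier G \<Longrightarrow> inv x \<otimes> (x \<otimes> y) = y"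
  by (simp add: m_assoc[symmetric])

lemma mult_inv_cancel_left [simp]:
  "x \<in> carrier G \<Longrightarrow> y \<in> carrier G \<Longrightarrow> x \<otimes> (inv x \<otimes> y) = y"
  by (simp add: m_assoc[symmetric])

lemma card_quotients_in:
  assumes D: "D \<subseteq> carrier G" and a: "a \<in> carrier G"
  shows "card {z \<in> carrier G. a \<otimes> inv z \<in> D} = card D"
proof -
  have "{z \<in> carrier G. a \<otimes> inv z \<in> D} = (\<lambda>x. inv x \<otimes> a) ` D"
  proof (intro equalityI subsetI)
    fix z assume z: "z \<in> {z \<in> carrier G. a \<otimes> inv z \<in> D}"
    then have "z = inv (a \<otimes> inv z) \<otimes> a"
      using a by (simp add: inv_mult_group m_assoc)
    then show "z \<in> (\<lambda>x. inv x \<otimes> a) ` D"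
      using z by blast
  next
    fix z assume "z \<in> (\<lambda>x. inv x \<otimes> a) ` D"
    then obtain x where "x \<in> D" and "z = inv x \<otimes> a"
      by blast
    then show "z \<in> {z \<in> carrier G. a \<otimes> inv z \<in> D}"
      using D a by (auto simp: inv_mult_group m_assoc)
  qed
  moreover have "inj_on (\<lambda>x. inv x \<otimes> a) D"
    using D a by (intro inj_onI) (metis in_mono inv_closed inv_inv right_cancel)
  ultimately show ?thesis
    by (simp add: card_image)
qed

lemma card_common_neighbours:
  assumes D: "D \<subseteq> carrier G" and D_inv: "\<And>x. x \<in> D \<Longrightarrow> inv x \<in> D"
    and a: "a \<in> carrier G" and b: "b \<in> carrier G"
  shows "card {z \<in> carrier G. a \<otimes> inv z \<in> D \<and> z \<otimes> inv b \<in> D}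
       = card {(x, y). x \<in> D \<and> y \<in> D \<and> x \<otimes> inv y = a \<otimes> inv b}"
proof (rule bij_betw_same_card[of "\<lambda>z. (a \<otimes> inv z, b \<otimes> inv z)"],
       rule bij_betwI[where g = "\<lambda>(x, y). inv x \<otimes> a"])
  show "(\<lambda>z. (a \<otimes> inv z, b \<otimes> inv z)) \<in> {z \<in> carrier G. a \<otimes> inv z \<in> D \<and> z \<otimes> inv b \<in> D}
      \<rightarrow> {(x, y). x \<in> D \<and> y \<in> D \<and> x \<otimes> inv y = a \<otimes> inv b}"
  proof
    fix z assume z: "z \<in> {z \<in> carrier G. a \<otimes> inv z \<in> D \<and> z \<otimes> inv b \<in> D}"
    then have "b \<otimes> inv z = inv (z \<otimes> inv b)" and "a \<otimes> inv z \<otimes> inv (b \<otimes> inv z) = a \<otimes> inv b"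
      using a b by (simp_all add: inv_mult_group m_assoc)
    then show "(a \<otimes> inv z, b \<otimes> inv z) \<in> {(x, y). x \<in> D \<and> y \<in> D \<and> x \<otimes> inv y = a \<otimes> inv b}"
      using z D_inv by auto
  qed
  show "(\<lambda>(x, y). inv x \<otimes> a) \<in> {(x, y). x \<in> D \<and> y \<in> D \<and> x \<otimes> inv y = a \<otimes> inv b}
      \<rightarrow> {z \<in> carrier G. a \<otimes> inv z \<in> D \<and> z \<otimes> inv b \<in> D}"
  proof clarify
    fix x y assume "x \<in> D" "y \<in> D" and xy: "x \<otimes> inv y = a \<otimes> inv b"
    moreover have "inv x \<otimes> a \<otimes> inv b = inv y"
      using \<open>x \<in> D\<close> \<open>y \<in> D\<close> D a b by (simp add: m_assoc xy[symmetric] subset_iff)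
    ultimately show "inv x \<otimes> a \<in> carrier G \<and> a \<otimes> inv (inv x \<otimes> a) \<in> D \<and> inv x \<otimes> a \<otimes> inv b \<in> D"
      using D D_inv a by (auto simp: inv_mult_group m_assoc)
  qed
  show "(\<lambda>(x, y). inv x \<otimes> a) (a \<otimes> inv z, b \<otimes> inv z) = z"
    if "z \<in> {z \<in> carrier G. a \<otimes> inv z \<in> D \<and> z \<otimes> inv b \<in> D}" for z
    using that a by (simp add: inv_mult_group m_assoc)
  show "(a \<otimes> inv ((\<lambda>(x, y). inv x \<otimes> a) p), b \<otimes> inv ((\<lambda>(x, y). inv x \<otimes> a) p)) = p"
    if pair: "p \<in> {(x, y). x \<in> D \<and> y \<in> D \<and> x \<otimes> inv y = a \<otimes> inv b}" for p
  proof -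
    obtain x y where p: "p = (x, y)" and x: "x \<in> carrier G" and y: "y \<in> carrier G"
      and xy: "x \<otimes> inv y = a \<otimes> inv b"
      using pair D by auto
    have "b \<otimes> inv (inv x \<otimes> a) = b \<otimes> inv a \<otimes> x"
      using x a b by (simp add: inv_mult_group m_assoc)
    also have "b \<otimes> inv a = y \<otimes> inv x"
      using arg_cong[OF xy, of "\<lambda>u. inv u"] x y a b by (simp add: inv_mult_group)
    also have "y \<otimes> inv x \<otimes> x = y"
      using x y by (simp add: m_assoc)
    finally show ?thesis
      using p x a by (simp add: inv_mult_group)
  qed
qed

lemma card_quotients_one:
  assumes "D \<subseteq> carrier G"
  shows "card {(x, y). x \<in> D \<and> y \<in> D \<and> x \<otimes> inv y = \<one>} = card D"
proof -
  have "{(x, y). x \<in> D \<and> y \<in> D \<and> x \<otimes> inv y = \<one>} = (\<lambda>x. (x, x)) ` D"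
    using assms by (auto simp: inv_solve_right' subset_iff)
  then show ?thesis
    by (simp add: card_image inj_on_def)
qed

context
  fixes D :: "'a set" and v k lam mu :: nat and e :: "nat \<Rightarrow> 'a"
  assumes pds: "is_regular_pds G D v k lam mu" and enum: "bij_betw e {..<v} (carrier G)"
begin

lemma enum_carrier: "i < v \<Longrightarrow> e i \<in> carrier G"
  using bij_betwE[OF enum] by blast

lemma cayley_mat_square:
  "cayley_mat G D e v * cayley_mat G D e v
    = (of_nat k \<cdot>\<^sub>m 1\<^sub>m v + of_nat lam \<cdot>\<^sub>m cayley_mat G D e v
       + of_nat mu \<cdot>\<^sub>m (ones_mat v - 1\<^sub>m v - cayley_mat G D e v) :: 'c::comm_ring_1 mat)"
    (is "?A * ?A = ?R")
proof (rule eq_matI)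
  have D: "D \<subseteq> carrier G" and card_D: "card D = k" and D_inv: "\<And>x. x \<in> D \<Longrightarrow> inv x \<in> D"
    and one_D: "\<one> \<notin> D"
    and count: "\<And>g. g \<in> carrier G \<Longrightarrow> g \<noteq> \<one> \<Longrightarrow>
        card {(x, y). x \<in> D \<and> y \<in> D \<and> x \<otimes> inv y = g} = (if g \<in> D then lam else mu)"
    using pds unfolding is_regular_pds_def is_pds_def by auto
  fix i j assume "i < dim_row ?R" and "j < dim_col ?R"
  then have i: "i < v" and j: "j < v"
    by simp_all
  have "(?A * ?A) $$ (i, j) = (\<Sum>l<v. ?A $$ (i, l) * ?A $$ (l, j))"
    using i j by (intro index_mult_mat_sum) simp_all
  also have "\<dots> = (\<Sum>l<v. if e i \<otimes> inv (e l) \<in> D \<and> e l \<otimes> inv (e j) \<in> D then 1 else 0)"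
    using i j by (intro sum.cong) (simp_all add: cayley_mat_def)
  also have "\<dots> = of_nat (card {z \<in> carrier G. e i \<otimes> inv z \<in> D \<and> z \<otimes> inv (e j) \<in> D})"
    by (rule sum_indicator_bij_betw[OF enum])
  also have "\<dots> = of_nat (card {(x, y). x \<in> D \<and> y \<in> D \<and> x \<otimes> inv y = e i \<otimes> inv (e j)})"
    using card_common_neighbours[OF D D_inv enum_carrier[OF i] enum_carrier[OF j]] by simp
  also have "\<dots> = ?R $$ (i, j)"
  proof (cases "i = j")
    case True
    then show ?thesis
      using i enum_carrier[OF i] card_quotients_one[OF D] card_D one_D by (simp add: cayley_mat_def)
  next
    case False
    then have "e i \<noteq> e j"
      using i j bij_betw_imp_inj_on[OF enum] by (auto dest: inj_onD)
    then have "e i \<otimes> inv (e j) \<noteq> \<one>"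
      using enum_carrier[OF i] enum_carrier[OF j] by (simp add: inv_solve_right')
    then show ?thesis
      using False i j count[of "e i \<otimes> inv (e j)"] enum_carrier[OF i] enum_carrier[OF j]
      by (simp add: cayley_mat_def)
  qed
  finally show "(?A * ?A) $$ (i, j) = ?R $$ (i, j)" .
qed simp_all

lemma cayley_mat_mult_ones_mat:
  "cayley_mat G D e v * ones_mat v = (of_nat k \<cdot>\<^sub>m ones_mat v :: 'c::comm_ring_1 mat)"
    (is "?A * ?J = _")
proof (rule eq_matI)
  have D: "D \<subseteq> carrier G" and card_D: "card D = k"
    using pds unfolding is_regular_pds_def is_pds_def by auto
  fix i j assume "i < dim_row (of_nat k \<cdot>\<^sub>m ?J)" and "j < dim_col (of_nat k \<cdot>\<^sub>m ?J)"
  then have i: "i < v" and j: "j < v"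
    by simp_all
  have "(?A * ?J) $$ (i, j) = (\<Sum>l<v. ?A $$ (i, l) * ?J $$ (l, j))"
    using i j by (intro index_mult_mat_sum) simp_all
  also have "\<dots> = (\<Sum>l<v. if e i \<otimes> inv (e l) \<in> D then 1 else 0)"
    using i j by (intro sum.cong) (simp_all add: cayley_mat_def)
  also have "\<dots> = of_nat k"
    using sum_indicator_bij_betw[OF enum, of "\<lambda>z. e i \<otimes> inv z \<in> D"]
      card_quotients_in[OF D enum_carrier[OF i]] card_D by simp
  finally show "(?A * ?J) $$ (i, j) = (of_nat k \<cdot>\<^sub>m ?J) $$ (i, j)"
    using i j by simp
qed simp_all

lemma mat_trace_cayley_mat: "mat_trace (cayley_mat G D e v :: 'c::comm_ring_1 mat) = 0"
proof -
  have "\<one> \<notin> D"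
    using pds unfolding is_regular_pds_def by blast
  then show ?thesis
    by (simp add: mat_trace_def cayley_mat_def enum_carrier)
qed

end

end

lemma pds_theta_sum: "pds_theta1 k lam mu + pds_theta2 k lam mu = real lam - real mu"
  unfolding pds_theta1_def pds_theta2_def by (simp add: field_simps)

lemma pds_theta_prod:
  assumes "mu \<le> k"
  shows "pds_theta1 k lam mu * pds_theta2 k lam mu = real mu - real k"
proof -
  let ?\<Delta> = "real_of_int (pds_Delta k lam mu)"
  have \<Delta>: "?\<Delta> = (real lam - real mu)\<^sup>2 + 4 * (real k - real mu)"
    unfolding pds_Delta_def by simp
  then have "sqrt ?\<Delta> * sqrt ?\<Delta> = ?\<Delta>"
    using assms by simp
  then show ?thesis
    unfolding pds_theta1_def pds_theta2_def using \<Delta> by (simp add: field_simps power2_eq_square)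
qed

lemma regular_pds_eigenvalue_relation:
  assumes "group G" and "finite (carrier G)" and pds: "is_regular_pds G D v k lam mu"
    and "0 < mu" and "mu < k"
  shows "\<exists>f g::nat. real k + real f * pds_theta1 k lam mu + real g * pds_theta2 k lam mu = 0"
proof -
  interpret group G by fact
  have "card (carrier G) = v"
    using pds unfolding is_regular_pds_def is_pds_def by blast
  then obtain e where enum: "bij_betw e {..<v} (carrier G)"
    using ex_bij_betw_nat_finite[OF \<open>finite (carrier G)\<close>] by (auto simp: atLeast0LessThan)
  have "0 < v"
    using \<open>card (carrier G) = v\<close> \<open>finite (carrier G)\<close> one_closed card_gt_0_iff by blast
  let ?A = "cayley_mat G D e v :: complex mat"
  let ?t1 = "complex_of_real (pds_theta1 k lam mu)" and ?t2 = "complex_of_real (pds_theta2 k lam mu)"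
  have roots_sum: "?t1 + ?t2 = of_nat lam - of_nat mu"
    and roots_prod: "?t1 * ?t2 = of_nat mu - of_nat k"
    using pds_theta_sum[of k lam mu] pds_theta_prod[of mu k lam] \<open>mu < k\<close>
    by (simp_all flip: of_real_add of_real_mult)
  have "?A * ?A = of_nat k \<cdot>\<^sub>m 1\<^sub>m v + of_nat lam \<cdot>\<^sub>m ?A + of_nat mu \<cdot>\<^sub>m (ones_mat v - 1\<^sub>m v - ?A)"
    using cayley_mat_square[OF pds enum] .
  then have "(?A - ?t1 \<cdot>\<^sub>m 1\<^sub>m v) * (?A - ?t2 \<cdot>\<^sub>m 1\<^sub>m v) = of_nat mu \<cdot>\<^sub>m ones_mat v"
    using srg_mat_factor[OF cayley_mat_carrier _ roots_sum roots_prod] by blast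
  then obtain f g :: nat where "of_nat k + of_nat f * ?t1 + of_nat g * ?t2 = 0"
    using srg_eigenvalue_relation[OF cayley_mat_carrier \<open>0 < v\<close> _ cayley_mat_mult_ones_mat[OF pds enum]]
      mat_trace_cayley_mat[OF pds enum] \<open>0 < mu\<close> by fastforce
  then have "complex_of_real (real k + real f * pds_theta1 k lam mu + real g * pds_theta2 k lam mu) = 0"
    by simp
  then show ?thesis
    by (metis of_real_eq_0_iff)
qed

theorem mainTheorem17:
  fixes G :: "('a, 'b) monoid_scheme" and D :: "'a set" and v k lam mu p l :: nat
  assumes "group G" and "finite (carrier G)"
    and "is_regular_pds G D v k lam mu"
    and "0 < mu" and "mu < k"
    and "sqrt (real_of_int (pds_Delta k lam mu)) \<in> \<int>"
  shows "(prime p \<and> (\<exists>m::int. pds_theta1 k lam mu = real (p ^ l) * of_int m)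
                   \<and> (\<exists>m::int. pds_theta2 k lam mu = real (p ^ l) * of_int m)
           \<longrightarrow> p ^ l dvd k)
       \<and> (\<forall>a b :: int. real_of_int a = pds_theta1 k lam mu \<and> real_of_int b = pds_theta2 k lam mu
           \<longrightarrow> gcd a b dvd int k)"
proof -
  obtain f g :: nat where fg: "real k + real f * pds_theta1 k lam mu + real g * pds_theta2 k lam mu = 0"
    using regular_pds_eigenvalue_relation[OF assms(1-5)] by blast
  have k_eq: "int k = - (int f * a + int g * b)"
    if "real_of_int a = pds_theta1 k lam mu" and "real_of_int b = pds_theta2 k lam mu" for a b
  proof -
    have "real_of_int (int k) = real_of_int (- (int f * a + int g * b))"
      using fg that by (simp add: algebra_simps)
    then show ?thesis
      by (simp only: of_int_eq_iff)
  qed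
  have "p ^ l dvd k"
    if "pds_theta1 k lam mu = real (p ^ l) * of_int m1"
      and "pds_theta2 k lam mu = real (p ^ l) * of_int m2" for m1 m2 :: int
  proof -
    have "int k = int (p ^ l) * - (int f * m1 + int g * m2)"
      using k_eq[of "int (p ^ l) * m1" "int (p ^ l) * m2"] that by (simp add: algebra_simps)
    then show ?thesis
      by (metis dvdI int_dvd_int_iff)
  qed
  moreover have "gcd a b dvd int k"
    if "real_of_int a = pds_theta1 k lam mu" and "real_of_int b = pds_theta2 k lam mu" for a b
    using k_eq[OF that] by simp
  ultimately show ?thesis
    by blast
qed

end
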